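(* Let $s_1(t)$, $s_2(t)$ be arbitrary functions with $s_1(0)=0$, and let $\alpha(\xi,t)$, $\rho(\xi,t)$, $\delta(\eta,t)$, $\theta(\eta,t)$ be smooth functions satisfying \[ \alpha_t=i\alpha_{\xi\xi}-i\alpha_\xi^2,\qquad \delta_t=i\delta_{\eta\eta}+i\delta_\eta^2+s_1(t), \] \[ \rho_t=-i\rho_{\xi\xi}-2i\alpha_\xi\rho_\xi+s_1(t)\rho+s_2(t),\qquad \theta_t=-i\theta_{\eta\eta}+2i\delta_\eta\theta_\eta+s_1(t)\theta-s_2(t). \] Then this system is linearized by the Cole--Hopf type substitutions \[ \alpha=-\ln\beta_1,\qquad \delta=\ln\beta_2+\int_0^t s_1(\tau)\,d\tau,\qquad \rho_\xi=\beta_1\beta_3\,e^{\int_0^t s_1(\tau)\,d\tau},\qquad \theta_\eta=e^{\delta}\beta_4, \] i.e. the functions $\beta_1(\xi,t)$, $\beta_2(\eta,t)$, $\beta_3(\xi,t)$, $\beta_4(\eta,t)$ so defined satisfy the heat equations with imaginary time \[ \beta_{1,t}=i\beta_{1,\xi\xi},\qquad \beta_{2,t}=i\beta_{2,\eta\eta},\qquad \beta_{3,t}=-i\beta_{3,\xi\xi},\qquad \beta_{4,t}=-i\beta_{4,\eta\eta}. \]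
   Context: Subscripts denote partial derivatives; all functions are complex-valued and smooth, and logarithms are taken locally (branches chosen so the substitutions make sense). *)

theory Defs
  imports "HOL-Analysis.Analysis"
begin

definition pd1 :: "(real \<Rightarrow> real \<Rightarrow> complex) \<Rightarrow> real \<Rightarrow> real \<Rightarrow> complex" where
  "pd1 f = (\<lambda>x t. vector_derivative (\<lambda>y. f y t) (at x))"

definition pd2 :: "(real \<Rightarrow> real \<Rightarrow> complex) \<Rightarrow> real \<Rightarrow> real \<Rightarrow> complex" where
  "pd2 f = (\<lambda>x t. vector_derivative (\<lambda>s. f x s) (at t))"

fun iterpd :: "bool list \<Rightarrow> (real \<Rightarrow> real \<Rightarrow> complex) \<Rightarrow> real \<Rightarrow> real \<Rightarrow> complex" where
  "iterpd [] f = f"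
| "iterpd (b # ws) f = (if b then pd1 else pd2) (iterpd ws f)"

definition smooth2 :: "(real \<times> real) set \<Rightarrow> (real \<Rightarrow> real \<Rightarrow> complex) \<Rightarrow> bool" where
  "smooth2 U f \<longleftrightarrow> (\<forall>ws. (\<lambda>p. iterpd ws f (fst p) (snd p)) differentiable_on U)"

definition integral0 :: "(real \<Rightarrow> complex) \<Rightarrow> real \<Rightarrow> complex" where
  "integral0 s t = (if 0 \<le> t then integral {0..t} s else - integral {t..0} s)"

end

theory Submission
  imports Defs
begin

(* Cole-Hopf: for beta = exp (kappa phi - C t) one has
   beta_t - i beta_xx = beta (kappa phi_t - C' - i kappa phi_xx - i kappa^2 phi_x^2),
   which vanishes as soon as phi_t = i phi_xx + i kappa phi_x^2 + s t and C' = kappa s;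
   alpha is the case kappa = -1, s = 0 and delta the case kappa = 1, s = s1.
   For beta = rho_x exp (- kappa phi - C t) one differentiates the equation of rho in x,
   which needs the symmetry of the mixed partials of rho (obtained by differentiating
   under the integral sign); the exponential factor then absorbs the transport term
   2 i kappa phi_x rho_x, and what remains cancels when C' = a - kappa s, a being the
   coefficient of rho. *)

lemma iterpd_append: "iterpd ws (iterpd vs f) = iterpd (ws @ vs) f"
  by (induction ws) auto

lemma smooth2_pd1: "smooth2 U f \<Longrightarrow> smooth2 U (pd1 f)"
  using iterpd_append[of _ "[True]" f] by (simp add: smooth2_def)

lemma smooth2_pd2: "smooth2 U f \<Longrightarrow> smooth2 U (pd2 f)"
  using iterpd_append[of _ "[False]" f] by (simp add: smooth2_def)

lemma smooth2_differentiable_on: "smooth2 U f \<Longrightarrow> (\<lambda>p. f (fst p) (snd p)) differentiable_on U"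
  unfolding smooth2_def by (metis iterpd.simps(1))

lemma smooth2_continuous_on: "smooth2 U f \<Longrightarrow> continuous_on U (\<lambda>p. f (fst p) (snd p))"
  by (rule differentiable_imp_continuous_on[OF smooth2_differentiable_on])

lemma smooth2_differentiable_at:
  assumes "smooth2 U f" "open U" "p \<in> U"
  shows "(\<lambda>p. f (fst p) (snd p)) differentiable at p"
  using assms smooth2_differentiable_on differentiable_on_eq_differentiable_at by blast

lemma has_vector_derivative_pd1:
  assumes "smooth2 U f" "open U" "(x, t) \<in> U"
  shows "((\<lambda>y. f y t) has_vector_derivative pd1 f x t) (at x)"
proof -
  have "((\<lambda>p. f (fst p) (snd p)) \<circ> (\<lambda>y. (y, t))) differentiable at x"
    using smooth2_differentiable_at[OF assms] by (intro differentiable_chain_at derivative_intros) auto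
  then show ?thesis
    unfolding pd1_def by (simp add: o_def vector_derivative_works)
qed

lemma has_vector_derivative_pd2:
  assumes "smooth2 U f" "open U" "(x, t) \<in> U"
  shows "((\<lambda>s. f x s) has_vector_derivative pd2 f x t) (at t)"
proof -
  have "((\<lambda>p. f (fst p) (snd p)) \<circ> (\<lambda>s. (x, s))) differentiable at t"
    using smooth2_differentiable_at[OF assms] by (intro differentiable_chain_at derivative_intros) auto
  then show ?thesis
    unfolding pd2_def by (simp add: o_def vector_derivative_works)
qed

lemma open_slice1: "open U \<Longrightarrow> open {y. (y, t) \<in> U}"
  using open_vimage[of U "\<lambda>y. (y, t)"] by (simp add: vimage_def continuous_on_Pair)

lemma open_slice2: "open U \<Longrightarrow> open {s. (x, s) \<in> U}"
  using open_vimage[of U "\<lambda>s. (x, s)"] by (simp add: vimage_def continuous_on_Pair)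

lemma pd1_eqI:
  assumes "open U" "(x, t) \<in> U" "\<And>y s. (y, s) \<in> U \<Longrightarrow> g y s = G y s"
    and "((\<lambda>y. G y t) has_vector_derivative D) (at x)"
  shows "pd1 g x t = D"
  unfolding pd1_def
  by (rule vector_derivative_at,
      rule has_vector_derivative_transform_within_open[OF assms(4) open_slice1[OF assms(1)]])
     (use assms in auto)

lemma pd2_eqI:
  assumes "open U" "(x, t) \<in> U" "\<And>y s. (y, s) \<in> U \<Longrightarrow> g y s = G y s"
    and "((\<lambda>s. G x s) has_vector_derivative D) (at t)"
  shows "pd2 g x t = D"
  unfolding pd2_def
  by (rule vector_derivative_at,
      rule has_vector_derivative_transform_within_open[OF assms(4) open_slice2[OF assms(1)]])
     (use assms in auto)

lemma has_vector_derivative_cexp [derivative_intros]: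
  fixes g :: "real \<Rightarrow> complex"
  assumes "(g has_vector_derivative g') (at x)"
  shows "((\<lambda>y. exp (g y)) has_vector_derivative g' * exp (g x)) (at x)"
  using field_vector_diff_chain_at[OF assms DERIV_exp] by (simp add: o_def)

lemma smooth2_continuous_on_slice:
  assumes "smooth2 U f" "open U" "\<And>y. y \<in> S \<Longrightarrow> (y, s) \<in> U"
  shows "continuous_on S (\<lambda>y. f y s)"
  using assms has_vector_derivative_pd1 has_vector_derivative_continuous
  by (metis continuous_at_imp_continuous_on)

lemma integral_pd1:
  assumes "smooth2 U f" "open U" "a \<le> x" "\<And>y. y \<in> {a..x} \<Longrightarrow> (y, s) \<in> U"
  shows "integral {a..x} (\<lambda>y. pd1 f y s) = f x s - f a s"
proof (rule integral_unique, rule fundamental_theorem_of_calculus[OF assms(3)])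
  fix y assume "y \<in> {a..x}"
  then show "((\<lambda>y. f y s) has_vector_derivative pd1 f y s) (at y within {a..x})"
    using has_vector_derivative_pd1[OF assms(1,2)] assms(4) has_vector_derivative_at_within by blast
qed

lemma has_vector_derivative_integral_pd2:
  assumes g: "smooth2 U g" and U: "open U" and "e > 0" and rect: "{a..x} \<times> ball t e \<subseteq> U"
  shows "((\<lambda>s. integral {a..x} (\<lambda>y. g y s)) has_vector_derivative integral {a..x} (\<lambda>y. pd2 g y t)) (at t)"
proof -
  have in_U: "(y, s) \<in> U" if "y \<in> cbox a x" "s \<in> ball t e" for y s
    using rect that by auto
  have "((\<lambda>s. integral (cbox a x) (\<lambda>y. g y s)) has_vector_derivative integral (cbox a x) (\<lambda>y. pd2 g y t))
      (at t within ball t e)"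
  proof (rule leibniz_rule_vector_derivative)
    fix s y assume "s \<in> ball t e" "y \<in> cbox a x"
    then show "((\<lambda>s. g y s) has_vector_derivative pd2 g y s) (at s within ball t e)"
      using has_vector_derivative_pd2[OF g U] in_U has_vector_derivative_at_within by blast
  next
    fix s assume "s \<in> ball t e"
    then show "(\<lambda>y. g y s) integrable_on cbox a x"
      using smooth2_continuous_on_slice[OF g U] in_U integrable_continuous by blast
  next
    have "continuous_on (ball t e \<times> cbox a x) (\<lambda>z. pd2 g (fst (snd z, fst z)) (snd (snd z, fst z)))"
      by (rule continuous_on_compose2[OF smooth2_continuous_on[OF smooth2_pd2[OF g]]])
         (use in_U in \<open>auto intro!: continuous_intros\<close>)
    then show "continuous_on (ball t e \<times> cbox a x) (\<lambda>(s, y). pd2 g y s)"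
      by (simp add: case_prod_unfold)
  qed (use \<open>e > 0\<close> in auto)
  then show ?thesis
    using at_within_open[of t "ball t e"] \<open>e > 0\<close> by simp
qed

lemma pd2_diff_eq_integral_pd2_pd1:
  assumes f: "smooth2 U f" and U: "open U" and "e > 0" and "a \<le> x"
    and rect: "{a..x} \<times> ball t e \<subseteq> U"
  shows "pd2 f x t - pd2 f a t = integral {a..x} (\<lambda>y. pd2 (pd1 f) y t)"
proof (rule vector_derivative_unique_at)
  show "((\<lambda>s. integral {a..x} (\<lambda>y. pd1 f y s)) has_vector_derivative
      integral {a..x} (\<lambda>y. pd2 (pd1 f) y t)) (at t)"
    by (rule has_vector_derivative_integral_pd2[OF smooth2_pd1[OF f] U \<open>e > 0\<close> rect])
  have "(a, t) \<in> U" "(x, t) \<in> U"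
    using rect \<open>a \<le> x\<close> \<open>e > 0\<close> by auto
  then have "((\<lambda>s. f x s - f a s) has_vector_derivative pd2 f x t - pd2 f a t) (at t)"
    using has_vector_derivative_pd2[OF f U] by (blast intro: has_vector_derivative_diff)
  then show "((\<lambda>s. integral {a..x} (\<lambda>y. pd1 f y s)) has_vector_derivative pd2 f x t - pd2 f a t) (at t)"
    by (rule has_vector_derivative_transform_within_open[OF _ open_ball])
       (use \<open>e > 0\<close> \<open>a \<le> x\<close> rect in \<open>auto intro!: integral_pd1[OF f U, symmetric]\<close>)
qed

lemma pd2_pd1_commute:
  assumes f: "smooth2 U f" and U: "open U" and "(x0, t0) \<in> U"
  shows "pd2 (pd1 f) x0 t0 = pd1 (pd2 f) x0 t0"
proof -
  obtain r where "r > 0" and ball: "ball (x0, t0) r \<subseteq> U"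
    using U \<open>(x0, t0) \<in> U\<close> open_contains_ball by blast
  define e where "e = r / 2"
  define a where "a = x0 - e"
  define b where "b = x0 + e"
  have "e > 0" and x0: "x0 \<in> {a<..<b}"
    using \<open>r > 0\<close> by (auto simp: e_def a_def b_def)
  have rect: "{a..b} \<times> ball t0 e \<subseteq> U"
  proof clarify
    fix y s assume "y \<in> {a..b}" "s \<in> ball t0 e"
    then have "\<bar>x0 - y\<bar> \<le> e" "\<bar>t0 - s\<bar> < e"
      by (auto simp: a_def b_def dist_real_def)
    then have "dist (x0, t0) (y, s) < r"
      using sqrt_sum_squares_le_sum_abs[of "x0 - y" "t0 - s"]
      by (simp add: dist_Pair_Pair dist_real_def e_def)
    then show "(y, s) \<in> U" using ball by auto
  qed
  define h where "h = pd2 (pd1 f)"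
  have "continuous_on {a..b} (\<lambda>y. h y t0)"
    unfolding h_def by (rule smooth2_continuous_on_slice[OF smooth2_pd2[OF smooth2_pd1[OF f]] U])
      (use rect \<open>e > 0\<close> in auto)
  then have "((\<lambda>x. integral {a..x} (\<lambda>y. h y t0)) has_vector_derivative h x0 t0) (at x0 within {a..b})"
    using x0 by (intro integral_has_vector_derivative) auto
  then have "((\<lambda>x. integral {a..x} (\<lambda>y. h y t0)) has_vector_derivative h x0 t0) (at x0 within {a<..<b})"
    by (rule has_vector_derivative_within_subset) auto
  then have "((\<lambda>x. integral {a..x} (\<lambda>y. h y t0)) has_vector_derivative h x0 t0) (at x0)"
    using at_within_open[OF x0 open_greaterThanLessThan] by simp
  then have "((\<lambda>x. pd2 f a t0 + integral {a..x} (\<lambda>y. h y t0)) has_vector_derivative h x0 t0) (at x0)"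
    using has_vector_derivative_add[OF has_vector_derivative_const] by fastforce
  moreover have "pd2 f a t0 + integral {a..x} (\<lambda>y. h y t0) = pd2 f x t0" if "x \<in> {a<..<b}" for x
  proof -
    have "a \<le> x" "{a..x} \<times> ball t0 e \<subseteq> U" using rect that by auto
    then show ?thesis
      using pd2_diff_eq_integral_pd2_pd1[OF f U \<open>e > 0\<close>, symmetric] unfolding h_def by simp
  qed
  ultimately have "((\<lambda>x. pd2 f x t0) has_vector_derivative h x0 t0) (at x0)"
    by (rule has_vector_derivative_transform_within_open[OF _ open_greaterThanLessThan x0])
  then show ?thesis
    using has_vector_derivative_pd1[OF smooth2_pd2[OF f] U \<open>(x0, t0) \<in> U\<close>] vector_derivative_unique_at
    unfolding h_def by blast
qed

lemma has_vector_derivative_integral0: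
  assumes s: "continuous_on UNIV s"
  shows "(integral0 s has_vector_derivative s t) (at t)"
proof -
  define a where "a = - \<bar>t\<bar> - 1"
  define b where "b = \<bar>t\<bar> + 1"
  have t: "t \<in> {a<..<b}" and "a \<le> 0" by (auto simp: a_def b_def)
  have int: "s integrable_on {p..q}" for p q
    by (rule integrable_continuous_interval[OF continuous_on_subset[OF s]]) simp
  have integral0_eq: "integral0 s u = integral {a..u} s - integral {a..0} s" if "u \<in> {a<..<b}" for u
  proof (cases "0 \<le> u")
    case True
    then show ?thesis
      using Henstock_Kurzweil_Integration.integral_combine[OF \<open>a \<le> 0\<close> True int]
      by (simp add: integral0_def algebra_simps)
  next
    case False
    then show ?thesis
      using Henstock_Kurzweil_Integration.integral_combine[of a u 0, OF _ _ int] that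
      by (simp add: integral0_def algebra_simps)
  qed
  have "((\<lambda>u. integral {a..u} s) has_vector_derivative s t) (at t within {a..b})"
    using t by (intro integral_has_vector_derivative continuous_on_subset[OF s]) auto
  then have "((\<lambda>u. integral {a..u} s) has_vector_derivative s t) (at t within {a<..<b})"
    by (rule has_vector_derivative_within_subset) auto
  then have "((\<lambda>u. integral {a..u} s - integral {a..0} s) has_vector_derivative s t) (at t)"
    using at_within_open[OF t open_greaterThanLessThan] by (simp add: has_vector_derivative_diff_const)
  then show ?thesis
    by (rule has_vector_derivative_transform_within_open[OF _ open_greaterThanLessThan t])
       (simp add: integral0_eq)
qed

lemma cole_hopf_potential:
  fixes \<phi> \<beta> :: "real \<Rightarrow> real \<Rightarrow> complex" and s C :: "real \<Rightarrow> complex" and \<kappa> :: complex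
  assumes U: "open U" and \<phi>: "smooth2 U \<phi>"
    and C: "\<And>t. (C has_vector_derivative \<kappa> * s t) (at t)"
    and \<phi>_eq: "\<And>x t. (x, t) \<in> U \<Longrightarrow>
      pd2 \<phi> x t = \<i> * pd1 (pd1 \<phi>) x t + \<i> * \<kappa> * (pd1 \<phi> x t)\<^sup>2 + s t"
    and \<beta>: "\<And>x t. (x, t) \<in> U \<Longrightarrow> \<beta> x t = exp (\<kappa> * \<phi> x t - C t)"
    and xt: "(x, t) \<in> U"
  shows "pd2 \<beta> x t = \<i> * pd1 (pd1 \<beta>) x t"
proof -
  note derivs = has_vector_derivative_pd1[OF \<phi> U] has_vector_derivative_pd1[OF smooth2_pd1[OF \<phi>] U]
    has_vector_derivative_pd2[OF \<phi> U] C
  have \<beta>_x: "pd1 \<beta> y s = \<kappa> * pd1 \<phi> y s * exp (\<kappa> * \<phi> y s - C s)" if "(y, s) \<in> U" for y s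
    by (rule pd1_eqI[OF U that \<beta>]) (auto intro!: derivative_eq_intros derivs that)
  have \<beta>_xx: "pd1 (pd1 \<beta>) x t = \<kappa> * (pd1 (pd1 \<phi>) x t + \<kappa> * (pd1 \<phi> x t)\<^sup>2) * \<beta> x t"
    by (rule pd1_eqI[OF U xt \<beta>_x])
       (auto intro!: derivative_eq_intros derivs xt simp: \<beta>[OF xt] algebra_simps power2_eq_square)
  have \<beta>_t: "pd2 \<beta> x t = \<kappa> * (pd2 \<phi> x t - s t) * \<beta> x t"
    by (rule pd2_eqI[OF U xt \<beta>])
       (auto intro!: derivative_eq_intros derivs xt simp: \<beta>[OF xt] algebra_simps)
  show ?thesis
    unfolding \<beta>_xx \<beta>_t \<phi>_eq[OF xt] by (simp add: algebra_simps)
qed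

lemma cole_hopf_gradient:
  fixes \<phi> \<rho> \<beta> :: "real \<Rightarrow> real \<Rightarrow> complex" and s a b C :: "real \<Rightarrow> complex" and \<kappa> :: complex
  assumes U: "open U" and \<phi>: "smooth2 U \<phi>" and \<rho>: "smooth2 U \<rho>"
    and C: "\<And>t. (C has_vector_derivative a t - \<kappa> * s t) (at t)"
    and \<phi>_eq: "\<And>x t. (x, t) \<in> U \<Longrightarrow>
      pd2 \<phi> x t = \<i> * pd1 (pd1 \<phi>) x t + \<i> * \<kappa> * (pd1 \<phi> x t)\<^sup>2 + s t"
    and \<rho>_eq: "\<And>x t. (x, t) \<in> U \<Longrightarrow>
      pd2 \<rho> x t = - \<i> * pd1 (pd1 \<rho>) x t + 2 * \<i> * \<kappa> * pd1 \<phi> x t * pd1 \<rho> x t + a t * \<rho> x t + b t"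
    and \<beta>: "\<And>x t. (x, t) \<in> U \<Longrightarrow> \<beta> x t = pd1 \<rho> x t * exp (- \<kappa> * \<phi> x t - C t)"
    and xt: "(x, t) \<in> U"
  shows "pd2 \<beta> x t = - \<i> * pd1 (pd1 \<beta>) x t"
proof -
  define r where "r = pd1 \<rho>"
  have r: "smooth2 U r" unfolding r_def by (rule smooth2_pd1[OF \<rho>])
  define E where "E x t = exp (- \<kappa> * \<phi> x t - C t)" for x t
  have \<beta>_r: "\<beta> y s = r y s * E y s" if "(y, s) \<in> U" for y s
    using \<beta>[OF that] by (simp add: r_def E_def)
  have \<rho>_r: "pd2 \<rho> y s = - \<i> * pd1 r y s + 2 * \<i> * \<kappa> * pd1 \<phi> y s * r y s + a s * \<rho> y s + b s"
    if "(y, s) \<in> U" for y s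
    using \<rho>_eq[OF that] by (simp add: r_def)
  note derivs = has_vector_derivative_pd1[OF \<phi> U] has_vector_derivative_pd1[OF smooth2_pd1[OF \<phi>] U]
    has_vector_derivative_pd2[OF \<phi> U] has_vector_derivative_pd1[OF \<rho> U, folded r_def]
    has_vector_derivative_pd1[OF r U] has_vector_derivative_pd1[OF smooth2_pd1[OF r] U]
    has_vector_derivative_pd2[OF r U] C
  have \<beta>_x: "pd1 \<beta> y s = (pd1 r y s - \<kappa> * r y s * pd1 \<phi> y s) * E y s" if "(y, s) \<in> U" for y s
    by (rule pd1_eqI[OF U that \<beta>_r])
       (auto intro!: derivative_eq_intros derivs that simp: E_def algebra_simps)
  have \<beta>_xx: "pd1 (pd1 \<beta>) x t = (pd1 (pd1 r) x t - \<kappa> * (pd1 r x t * pd1 \<phi> x t + r x t * pd1 (pd1 \<phi>) x t)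
      - \<kappa> * pd1 \<phi> x t * (pd1 r x t - \<kappa> * r x t * pd1 \<phi> x t)) * E x t"
    by (rule pd1_eqI[OF U xt \<beta>_x])
       (auto intro!: derivative_eq_intros derivs xt simp: E_def algebra_simps)
  have \<beta>_t: "pd2 \<beta> x t = (pd2 r x t - r x t * (\<kappa> * pd2 \<phi> x t + a t - \<kappa> * s t)) * E x t"
    by (rule pd2_eqI[OF U xt \<beta>_r])
       (auto intro!: derivative_eq_intros derivs xt simp: E_def algebra_simps)
  have "pd2 r x t = pd1 (pd2 \<rho>) x t"
    unfolding r_def by (rule pd2_pd1_commute[OF \<rho> U xt])
  also have "\<dots> = - \<i> * pd1 (pd1 r) x t + 2 * \<i> * \<kappa> * (pd1 (pd1 \<phi>) x t * r x t + pd1 \<phi> x t * pd1 r x t)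
      + a t * r x t"
    by (rule pd1_eqI[OF U xt \<rho>_r])
       (auto intro!: derivative_eq_intros derivs xt simp: algebra_simps)
  finally have r_t: "pd2 r x t = \<dots>" .
  show ?thesis
    unfolding \<beta>_xx \<beta>_t r_t \<phi>_eq[OF xt] by (simp add: algebra_simps power2_eq_square)
qed

theorem theorem5p1:
  fixes s1 s2 :: "real \<Rightarrow> complex"
    and \<alpha> \<rho> \<delta> \<theta> \<beta>1 \<beta>2 \<beta>3 \<beta>4 :: "real \<Rightarrow> real \<Rightarrow> complex"
    and U V :: "(real \<times> real) set"
  assumes "open U" and "open V"
    and "continuous_on UNIV s1" and "s1 0 = 0"
    and "smooth2 U \<alpha>" and "smooth2 U \<rho>" and "smooth2 V \<delta>" and "smooth2 V \<theta>"
    and "\<forall>(x, t)\<in>U. pd2 \<alpha> x t = \<i> * pd1 (pd1 \<alpha>) x t - \<i> * (pd1 \<alpha> x t)\<^sup>2"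
    and "\<forall>(y, t)\<in>V. pd2 \<delta> y t = \<i> * pd1 (pd1 \<delta>) y t + \<i> * (pd1 \<delta> y t)\<^sup>2 + s1 t"
    and "\<forall>(x, t)\<in>U. pd2 \<rho> x t = - \<i> * pd1 (pd1 \<rho>) x t - 2 * \<i> * pd1 \<alpha> x t * pd1 \<rho> x t
                                 + s1 t * \<rho> x t + s2 t"
    and "\<forall>(y, t)\<in>V. pd2 \<theta> y t = - \<i> * pd1 (pd1 \<theta>) y t + 2 * \<i> * pd1 \<delta> y t * pd1 \<theta> y t
                                 + s1 t * \<theta> y t - s2 t"
    and "\<forall>(x, t)\<in>U. exp (- \<alpha> x t) = \<beta>1 x t"
    and "\<forall>(y, t)\<in>V. exp (\<delta> y t - integral0 s1 t) = \<beta>2 y t"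
    and "\<forall>(x, t)\<in>U. pd1 \<rho> x t = \<beta>1 x t * \<beta>3 x t * exp (integral0 s1 t)"
    and "\<forall>(y, t)\<in>V. pd1 \<theta> y t = exp (\<delta> y t) * \<beta>4 y t"
  shows "(\<forall>(x, t)\<in>U. pd2 \<beta>1 x t = \<i> * pd1 (pd1 \<beta>1) x t
                   \<and> pd2 \<beta>3 x t = - \<i> * pd1 (pd1 \<beta>3) x t)
       \<and> (\<forall>(y, t)\<in>V. pd2 \<beta>2 y t = \<i> * pd1 (pd1 \<beta>2) y t
                   \<and> pd2 \<beta>4 y t = - \<i> * pd1 (pd1 \<beta>4) y t)"
proof -
  have \<beta>3: "\<beta>3 x t = pd1 \<rho> x t * exp (- (- 1) * \<alpha> x t - integral0 s1 t)" if "(x, t) \<in> U" for x t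
  proof -
    have "pd1 \<rho> x t = exp (- \<alpha> x t) * \<beta>3 x t * exp (integral0 s1 t)"
      using assms(13,15) that by force
    then show ?thesis by (simp add: exp_diff exp_minus field_simps)
  qed
  have \<beta>4: "\<beta>4 y t = pd1 \<theta> y t * exp (- 1 * \<delta> y t - 0)" if "(y, t) \<in> V" for y t
    using assms(16) that by (auto simp: exp_minus field_simps)
  have "pd2 \<beta>1 x t = \<i> * pd1 (pd1 \<beta>1) x t" if "(x, t) \<in> U" for x t
    by (rule cole_hopf_potential[OF \<open>open U\<close> \<open>smooth2 U \<alpha>\<close>, where \<kappa>="- 1" and s="\<lambda>_. 0" and C="\<lambda>_. 0"])
       (use assms(9,13) that in auto)
  moreover have "pd2 \<beta>3 x t = - \<i> * pd1 (pd1 \<beta>3) x t" if "(x, t) \<in> U" for x t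
    by (rule cole_hopf_gradient[OF \<open>open U\<close> \<open>smooth2 U \<alpha>\<close> \<open>smooth2 U \<rho>\<close>,
          where \<kappa>="- 1" and s="\<lambda>_. 0" and a=s1 and b=s2 and C="integral0 s1"])
       (use assms(3,9,11) \<beta>3 that has_vector_derivative_integral0 in auto)
  moreover have "pd2 \<beta>2 y t = \<i> * pd1 (pd1 \<beta>2) y t" if "(y, t) \<in> V" for y t
    by (rule cole_hopf_potential[OF \<open>open V\<close> \<open>smooth2 V \<delta>\<close>, where \<kappa>=1 and s=s1 and C="integral0 s1"])
       (use assms(3,10,14) that has_vector_derivative_integral0 in auto)
  moreover have "pd2 \<beta>4 y t = - \<i> * pd1 (pd1 \<beta>4) y t" if "(y, t) \<in> V" for y t
    by (rule cole_hopf_gradient[OF \<open>open V\<close> \<open>smooth2 V \<delta>\<close> \<open>smooth2 V \<theta>\<close>,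
          where \<kappa>=1 and s=s1 and a=s1 and b="\<lambda>t. - s2 t" and C="\<lambda>_. 0"])
       (use assms(10,12) \<beta>4 that in auto)
  ultimately show ?thesis by blast
qed

end
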